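(* Let $X$ be a compact metric space and $f:X\dashrightarrow X$ a continuous open-dense defined map which is good with respect to iterates. Let $\mu$ be an $f$-invariant Borel probability measure on $X$ with $\mu(I_\infty(f))=0$. Then there exists a unique Borel measure $\hat\mu$ on $\Gamma_{f,\infty}$ such that $(\pi_1)_*(\hat\mu)\le\mu$, $\hat\mu(\Gamma_{f,\infty})=1$ and $(\sigma_f)_*(\hat\mu)=\hat\mu$. Moreover $h_\mu(f)=h_{\hat\mu}(\sigma_f)$.
   Context: A continuous open-dense defined map $f:X\dashrightarrow X$ is a continuous map $f:\mathrm{OpenDom}(f)\to X$ with $\mathrm{OpenDom}(f)$ open dense; $I(f)=X\setminus\mathrm{OpenDom}(f)$. Let $\Omega_{f,\infty}=\{x\in\mathrm{OpenDom}(f):f^n(x)\notin I(f)\ \forall n\in\mathbb{N}\}$ and $I_\infty(f)=X\setminus\Omega_{f,\infty}$; $f$ is good with respect to iterates if $\Omega_{f,\infty}$ is dense and $I_\infty(f)$ is nowhere dense. $\Gamma_{f,\infty}$ is the closure in $X^{\mathbb{N}}$ (product topology, a compact metrizable space) of $\{(x,f(x),f^2(x),\ldots):x\in\Omega_{f,\infty}\}$; $\sigma_f:\Gamma_{f,\infty}\to\Gamma_{f,\infty}$ is the shift $(x_1,x_2,\ldots)\mapsto(x_2,x_3,\ldots)$ and $\pi_1(x_1,x_2,\ldots)=x_1$. $f$-invariance of $\mu$ means $f_*\mu=\mu$, where for a measure with no mass on $I(f)$, $f_*\mu(\varphi)=\int_{X\setminus I(f)}\varphi\circ f\,d\mu$.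 $h_\mu(f)$ is the Kolmogorov–Sinai entropy of the measure-preserving map $f:\Omega_{f,\infty}\to\Omega_{f,\infty}$ with respect to $\mu$, and $h_{\hat\mu}(\sigma_f)$ is the Kolmogorov–Sinai entropy of $\sigma_f$ with respect to $\hat\mu$. For measures, $\le$ means inequality of integrals against all continuous functions (equivalently on all Borel sets). *)

theory Defs
  imports "HOL-Probability.Probability"
begin

text \<open>A continuous open-dense defined map on the space (the type 'a) is given by
  its open dense domain D = OpenDom(f) and a function f that is continuous on D.
  The indeterminacy set is I(f) = - D.\<close>

definition open_dense_map :: "'a::topological_space set \<Rightarrow> ('a \<Rightarrow> 'a) \<Rightarrow> bool" where
  "open_dense_map D f \<longleftrightarrow> open D \<and> closure D = UNIV \<and> continuous_on D f"

definition indet :: "'a set \<Rightarrow> 'a set" where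
  "indet D = - D"

definition Omega_inf :: "'a set \<Rightarrow> ('a \<Rightarrow> 'a) \<Rightarrow> 'a set" where
  "Omega_inf D f = {x. \<forall>n. (f ^^ n) x \<in> D}"

definition I_inf :: "'a set \<Rightarrow> ('a \<Rightarrow> 'a) \<Rightarrow> 'a set" where
  "I_inf D f = - Omega_inf D f"

definition good_wrt_iterates :: "'a::topological_space set \<Rightarrow> ('a \<Rightarrow> 'a) \<Rightarrow> bool" where
  "good_wrt_iterates D f \<longleftrightarrow>
     closure (Omega_inf D f) = UNIV \<and> interior (closure (I_inf D f)) = {}"

text \<open>Gamma_{f,infinity}: closure in X^N (product topology on nat => 'a) of the orbits.
  Index 0 corresponds to the first coordinate x_1.\<close>
definition Gamma_inf :: "'a::topological_space set \<Rightarrow> ('a \<Rightarrow> 'a) \<Rightarrow> (nat \<Rightarrow> 'a) set" where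
  "Gamma_inf D f = closure ((\<lambda>x. \<lambda>n. (f ^^ n) x) ` Omega_inf D f)"

definition shift :: "(nat \<Rightarrow> 'a) \<Rightarrow> (nat \<Rightarrow> 'a)" where
  "shift s = (\<lambda>n. s (Suc n))"

definition pi1 :: "(nat \<Rightarrow> 'a) \<Rightarrow> 'a" where
  "pi1 s = s 0"

text \<open>Push-forward of a measure with no mass on I(f): f_* mu (A) = mu (f^{-1}(A) minus I(f)).\<close>
definition push_dom :: "'a set \<Rightarrow> ('a \<Rightarrow> 'b) \<Rightarrow> 'a measure \<Rightarrow> 'b::topological_space measure" where
  "push_dom D f M = distr (restrict_space M D) borel f"

definition finite_meas_partition :: "'a measure \<Rightarrow> 'a set set \<Rightarrow> bool" where
  "finite_meas_partition M P \<longleftrightarrow>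
     finite P \<and> P \<subseteq> sets M \<and> disjoint P \<and> \<Union>P = space M"

definition partition_entropy :: "'a measure \<Rightarrow> 'a set set \<Rightarrow> real" where
  "partition_entropy M P = (\<Sum>A\<in>P. - measure M A * ln (measure M A))"

definition join_iter :: "'a measure \<Rightarrow> ('a \<Rightarrow> 'a) \<Rightarrow> 'a set set \<Rightarrow> nat \<Rightarrow> 'a set set" where
  "join_iter M T P n =
     {(\<Inter>i<n. (T ^^ i) -` (a i)) \<inter> space M | a. \<forall>i<n. a i \<in> P} - {{}}"

definition entropy_partition :: "'a measure \<Rightarrow> ('a \<Rightarrow> 'a) \<Rightarrow> 'a set set \<Rightarrow> real" where
  "entropy_partition M T P =
     lim (\<lambda>n. partition_entropy M (join_iter M T P (Suc n)) / real (Suc n))"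

definition ks_entropy :: "'a measure \<Rightarrow> ('a \<Rightarrow> 'a) \<Rightarrow> ereal" where
  "ks_entropy M T =
     (SUP P\<in>{P. finite_meas_partition M P}. ereal (entropy_partition M T P))"

end

theory Submission
  imports Defs
begin

(* The orbit map x |-> (x, f x, f^2 x, ...) is continuous on Omega_{f,oo} and turns f into the
   shift, so mu-hat is the image of mu restricted to Omega_{f,oo}. A point of Gamma_{f,oo} whose
   first coordinate lies in Omega_{f,oo} is the orbit of that coordinate, because the relation
   s_{n+1} = f s_n survives taking limits where f is continuous. Any competitor nu gives no mass
   to sequences starting outside Omega_{f,oo}, hence nu <= mu-hat, and equality follows since
   both are probability measures. Finally pi_1 inverts the orbit map off a null set, so pulling
   partitions back along the orbit map matches the partitions on both sides, with their
   entropies. *)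

definition join_cell :: "'a measure \<Rightarrow> ('a \<Rightarrow> 'a) \<Rightarrow> nat \<Rightarrow> (nat \<Rightarrow> 'a set) \<Rightarrow> 'a set" where
  "join_cell M T n a = (\<Inter>i<n. (T ^^ i) -` a i) \<inter> space M"

lemma join_iter_eq: "join_iter M T P n = {join_cell M T n a | a. \<forall>i<n. a i \<in> P} - {{}}"
  unfolding join_iter_def join_cell_def ..

lemma join_cell_cong: "(\<And>i. i < n \<Longrightarrow> a i = b i) \<Longrightarrow> join_cell M T n a = join_cell M T n b"
  unfolding join_cell_def by simp

lemma join_iter_finite:
  assumes "finite P"
  shows "finite (join_iter M T P n)"
proof (rule finite_subset)
  show "join_iter M T P n \<subseteq> join_cell M T n ` PiE {..<n} (\<lambda>_. P)"
  proof
    fix B assume "B \<in> join_iter M T P n"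
    then obtain a where a: "\<forall>i<n. a i \<in> P" and B: "B = join_cell M T n a"
      unfolding join_iter_eq by blast
    have "restrict a {..<n} \<in> PiE {..<n} (\<lambda>_. P)"
      using a by simp
    moreover have "B = join_cell M T n (restrict a {..<n})"
      unfolding B by (rule join_cell_cong) simp
    ultimately show "B \<in> join_cell M T n ` PiE {..<n} (\<lambda>_. P)"
      by blast
  qed
  show "finite (join_cell M T n ` PiE {..<n} (\<lambda>_. P))"
    using assms by (simp add: finite_PiE)
qed

lemma disjoint_join_iter:
  assumes "disjoint P"
  shows "disjoint (join_iter M T P n)"
proof (rule disjointI)
  fix B C assume "B \<in> join_iter M T P n" "C \<in> join_iter M T P n" "B \<noteq> C"
  then obtain a b where a: "\<forall>i<n. a i \<in> P" "B = join_cell M T n a"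
    and b: "\<forall>i<n. b i \<in> P" "C = join_cell M T n b"
    unfolding join_iter_eq by blast
  with \<open>B \<noteq> C\<close> obtain i where i: "i < n" "a i \<noteq> b i"
    using join_cell_cong by metis
  then have "a i \<inter> b i = {}"
    using assms a b by (auto simp: disjoint_def)
  moreover have "B \<subseteq> (T ^^ i) -` a i" "C \<subseteq> (T ^^ i) -` b i"
    using i a b by (auto simp: join_cell_def)
  ultimately show "B \<inter> C = {}" by blast
qed

lemma join_iter_subset_sets:
  assumes "P \<subseteq> sets M" and "T \<in> measurable M M"
  shows "join_iter M T P n \<subseteq> sets M"
proof
  fix B assume "B \<in> join_iter M T P n"
  then obtain a where a: "\<forall>i<n. a i \<in> P" and B: "B = join_cell M T n a"
    unfolding join_iter_eq by blast
  have "B = space M \<inter> (\<Inter>i<n. (T ^^ i) -` a i \<inter> space M)"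
    using B by (auto simp: join_cell_def)
  also have "\<dots> \<in> sets M"
  proof (cases "n = 0")
    case False
    then show ?thesis
      using a assms measurable_sets[OF measurable_compose_n[OF assms(2)]]
      by (intro sets.Int sets.top sets.countable_INT') auto
  qed simp
  finally show "B \<in> sets M" .
qed

lemma join_iter_insert_empty: "join_iter M T (insert {} P) n = join_iter M T P n"
proof -
  have cells_in_P: "\<forall>i<n. a i \<in> P"
    if "\<forall>i<n. a i \<in> insert {} P" and "join_cell M T n a \<noteq> {}" for a
  proof (intro allI impI)
    fix i assume "i < n"
    then show "a i \<in> P"
      using that by (cases "a i = {}") (auto simp: join_cell_def)
  qed
  show ?thesis
    unfolding join_iter_eq
  proof (intro equalityI subsetI)
    fix B assume "B \<in> {join_cell M T n a | a. \<forall>i<n. a i \<in> insert {} P} - {{}}"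
    then obtain a where "\<forall>i<n. a i \<in> insert {} P" "B = join_cell M T n a" "B \<noteq> {}"
      by blast
    with cells_in_P show "B \<in> {join_cell M T n a | a. \<forall>i<n. a i \<in> P} - {{}}"
      by blast
  qed blast
qed

lemma image_remove_empty: "g {} = {} \<Longrightarrow> g ` (C - {{}}) - {{}} = g ` C - {{}}"
  by auto

locale semiconjugacy =
  fixes M :: "'a measure" and N :: "'b measure"
    and T :: "'a \<Rightarrow> 'a" and S :: "'b \<Rightarrow> 'b" and \<phi> :: "'a \<Rightarrow> 'b"
  assumes measurable_\<phi>: "\<phi> \<in> measurable M N"
    and distr_\<phi>: "distr M N \<phi> = N"
    and measurable_S: "S \<in> measurable N N"
    and T_space: "T \<in> space M \<rightarrow> space M"
    and S_\<phi>: "x \<in> space M \<Longrightarrow> S (\<phi> x) = \<phi> (T x)"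
begin

definition pullback :: "'b set \<Rightarrow> 'a set" where
  "pullback B = \<phi> -` B \<inter> space M"

lemma pullback_empty [simp]: "pullback {} = {}"
  by (simp add: pullback_def)

lemma funpow_T_space: "x \<in> space M \<Longrightarrow> (T ^^ i) x \<in> space M"
  by (induction i) (use T_space in auto)

lemma funpow_S_\<phi>: "x \<in> space M \<Longrightarrow> (S ^^ i) (\<phi> x) = \<phi> ((T ^^ i) x)"
  by (induction i) (simp_all add: S_\<phi> funpow_T_space)

lemma pullback_join_cell: "pullback (join_cell N S n b) = join_cell M T n (pullback \<circ> b)"
  using measurable_space[OF measurable_\<phi>] funpow_S_\<phi> funpow_T_space
  by (auto simp: pullback_def join_cell_def)

lemma join_iter_pullback:
  "join_iter M T (pullback ` Q) n = pullback ` join_iter N S Q n - {{}}"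
proof -
  have "{join_cell M T n a | a. \<forall>i<n. a i \<in> pullback ` Q}
      = {join_cell M T n (pullback \<circ> b) | b. \<forall>i<n. b i \<in> Q}"
  proof (intro equalityI subsetI)
    fix A assume "A \<in> {join_cell M T n a | a. \<forall>i<n. a i \<in> pullback ` Q}"
    then obtain a where a: "\<forall>i<n. a i \<in> pullback ` Q" and A: "A = join_cell M T n a"
      by blast
    then have "\<forall>i\<in>{..<n}. \<exists>c. c \<in> Q \<and> a i = pullback c"
      by blast
    from bchoice[OF this] obtain b where b: "\<forall>i<n. b i \<in> Q \<and> a i = pullback (b i)"
      by auto
    then have "A = join_cell M T n (pullback \<circ> b)"
      unfolding A by (intro join_cell_cong) simp
    then show "A \<in> {join_cell M T n (pullback \<circ> b) | b. \<forall>i<n. b i \<in> Q}"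
      using b by blast
  qed auto
  also have "\<dots> = {pullback (join_cell N S n b) | b. \<forall>i<n. b i \<in> Q}"
    by (simp only: pullback_join_cell)
  also have "\<dots> = pullback ` {join_cell N S n b | b. \<forall>i<n. b i \<in> Q}"
    by blast
  finally show ?thesis
    unfolding join_iter_eq using image_remove_empty[of pullback] by simp
qed

lemma measure_pullback: "B \<in> sets N \<Longrightarrow> measure M (pullback B) = measure N B"
  using measure_distr[OF measurable_\<phi>] distr_\<phi> by (simp add: pullback_def)

lemma finite_meas_partition_pullback:
  assumes "finite_meas_partition N Q"
  shows "finite_meas_partition M (pullback ` Q)"
  using assms measurable_sets[OF measurable_\<phi>] measurable_space[OF measurable_\<phi>]
  unfolding finite_meas_partition_def pullback_def disjoint_def
  by (auto 0 4)

lemma partition_entropy_join_pullback: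
  assumes Q: "finite_meas_partition N Q"
  shows "partition_entropy M (join_iter M T (pullback ` Q) n) = partition_entropy N (join_iter N S Q n)"
proof -
  let ?J = "join_iter N S Q n"
  let ?h = "\<lambda>M A. - measure M A * ln (measure M A)"
  have "finite Q" "disjoint Q" "Q \<subseteq> sets N"
    using Q by (simp_all add: finite_meas_partition_def)
  then have finite: "finite ?J" and disjoint: "disjoint ?J" and sets: "?J \<subseteq> sets N"
    by (simp_all add: join_iter_finite disjoint_join_iter join_iter_subset_sets[OF _ measurable_S])
  have "partition_entropy M (join_iter M T (pullback ` Q) n) = sum (?h M) (pullback ` ?J - {{}})"
    unfolding partition_entropy_def join_iter_pullback ..
  also have "\<dots> = sum (?h M) (pullback ` ?J)"
    using finite by (intro sum.mono_neutral_left) auto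
  also have "\<dots> = sum (?h M \<circ> pullback) ?J"
  proof (rule sum.reindex_nontrivial[OF finite])
    fix B C assume "B \<in> ?J" "C \<in> ?J" "B \<noteq> C" "pullback B = pullback C"
    then have "pullback B = {}"
      using disjoint unfolding disjoint_def pullback_def by blast
    then show "?h M (pullback B) = 0" by simp
  qed
  also have "\<dots> = sum (?h N) ?J"
    using sets by (intro sum.cong) (auto simp: measure_pullback)
  finally show ?thesis
    unfolding partition_entropy_def .
qed

lemma entropy_partition_pullback:
  "finite_meas_partition N Q \<Longrightarrow> entropy_partition M T (pullback ` Q) = entropy_partition N S Q"
  unfolding entropy_partition_def by (simp add: partition_entropy_join_pullback)

lemma ks_entropy_le: "ks_entropy N S \<le> ks_entropy M T"
  unfolding ks_entropy_def
  by (rule SUP_mono) (use finite_meas_partition_pullback entropy_partition_pullback in fastforce)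

context
  fixes \<psi> :: "'b \<Rightarrow> 'a" and L :: "'a measure"
  assumes measurable_\<psi>: "\<psi> \<in> measurable N L"
    and sets_M_subset: "sets M \<subseteq> sets L"
    and \<psi>_\<phi>: "x \<in> space M \<Longrightarrow> \<psi> (\<phi> x) = x"
begin

definition lift :: "'a set \<Rightarrow> 'b set" where
  "lift A = \<psi> -` A \<inter> space N"

lemma pullback_lift: "A \<subseteq> space M \<Longrightarrow> pullback (lift A) = A"
  using measurable_space[OF measurable_\<phi>] \<psi>_\<phi> by (auto simp: pullback_def lift_def)

lemma pullback_outside_lift: "pullback (space N - lift (space M)) = {}"
  using measurable_space[OF measurable_\<phi>] \<psi>_\<phi> by (auto simp: pullback_def lift_def)

lemma finite_meas_partition_lift:
  assumes P: "finite_meas_partition M P"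
  shows "finite_meas_partition N (insert (space N - lift (space M)) (lift ` P))"
    (is "finite_meas_partition N ?Q")
proof -
  have P_sets: "P \<subseteq> sets M" and P_disjoint: "disjoint P" and P_space: "\<Union>P = space M"
    using P by (auto simp: finite_meas_partition_def)
  have lift_sets: "lift A \<in> sets N" if "A \<in> sets M" for A
    using measurable_sets[OF measurable_\<psi>] that sets_M_subset unfolding lift_def by blast
  have lift_disjoint: "disjoint (lift ` P)"
  proof (rule disjointI)
    fix B C assume "B \<in> lift ` P" "C \<in> lift ` P" "B \<noteq> C"
    then obtain A A' where "A \<in> P" "A' \<in> P" "A \<noteq> A'" "B = lift A" "C = lift A'"
      by blast
    then show "B \<inter> C = {}"
      using disjointD[OF P_disjoint] unfolding lift_def by blast
  qed
  have "disjnt (space N - lift (space M)) B" if "B \<in> lift ` P" for B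
    using that P_space unfolding lift_def disjnt_def by blast
  then have "disjoint ?Q"
    using lift_disjoint by (simp add: pairwise_insert disjnt_sym)
  moreover have "\<Union>?Q = space N"
  proof -
    have "\<Union>(lift ` P) = lift (space M)"
      unfolding lift_def P_space[symmetric] by blast
    moreover have "lift (space M) \<subseteq> space N"
      by (simp add: lift_def)
    ultimately show ?thesis
      by auto
  qed
  moreover have "?Q \<subseteq> sets N"
    using P_sets lift_sets[OF sets.top] lift_sets by auto
  ultimately show ?thesis
    using P unfolding finite_meas_partition_def by blast
qed

lemma partition_is_pullback:
  assumes P: "finite_meas_partition M P"
  obtains Q where "finite_meas_partition N Q" and "pullback ` Q = insert {} P"
proof
  let ?Q = "insert (space N - lift (space M)) (lift ` P)"
  show "finite_meas_partition N ?Q"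
    using finite_meas_partition_lift[OF P] .
  have "pullback (lift A) = A" if "A \<in> P" for A
    using that P pullback_lift by (auto simp: finite_meas_partition_def)
  then have "pullback ` lift ` P = P"
    by (simp add: image_image cong: image_cong)
  then show "pullback ` ?Q = insert {} P"
    by (simp add: pullback_outside_lift)
qed

lemma ks_entropy_eq: "ks_entropy M T = ks_entropy N S"
proof (rule antisym[OF _ ks_entropy_le])
  have "\<exists>Q\<in>{Q. finite_meas_partition N Q}. entropy_partition M T P \<le> entropy_partition N S Q"
    if P: "finite_meas_partition M P" for P
  proof -
    obtain Q where Q: "finite_meas_partition N Q" "pullback ` Q = insert {} P"
      using partition_is_pullback[OF P] .
    have "entropy_partition M T P = entropy_partition M T (insert {} P)"
      unfolding entropy_partition_def join_iter_insert_empty ..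
    also have "\<dots> = entropy_partition N S Q"
      using entropy_partition_pullback[OF Q(1)] Q(2) by simp
    finally show ?thesis
      using Q(1) by auto
  qed
  then show "ks_entropy M T \<le> ks_entropy N S"
    unfolding ks_entropy_def by (intro SUP_mono) auto
qed

end

end

lemma continuous_on_shift: "continuous_on A shift"
  unfolding shift_def
  by (intro continuous_on_coordinatewise_then_product continuous_on_subset[OF continuous_on_product_coordinates]) auto

lemma borel_measurable_shift: "shift \<in> borel_measurable borel"
  by (rule borel_measurable_continuous_onI[OF continuous_on_shift])

lemma borel_measurable_pi1: "pi1 \<in> borel_measurable borel"
  unfolding pi1_def by (intro borel_measurable_continuous_onI) simp

lemma measure_eqI_emeasure_le:
  assumes sets: "sets M = sets N" and "finite_measure N"
    and le: "\<And>A. A \<in> sets M \<Longrightarrow> emeasure M A \<le> emeasure N A"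
    and space: "emeasure M (space M) = emeasure N (space N)"
  shows "M = N"
proof (rule measure_eqI[OF sets])
  interpret N: finite_measure N by fact
  have space_eq: "space M = space N"
    using sets by (rule sets_eq_imp_space_eq)
  fix A assume A: "A \<in> sets M"
  then have A': "A \<in> sets N" "space N - A \<in> sets M"
    using sets space_eq by auto
  have finite: "emeasure N (space N - A) \<noteq> \<infinity>" "emeasure M (space N - A) \<noteq> \<infinity>"
    using N.emeasure_finite le[OF A'(2)] by (auto simp: top_unique)
  have "emeasure N A = emeasure N (space N) - emeasure N (space N - A)"
    using emeasure_compl[of "space N - A" N] A' finite(1) by (simp add: Diff_Diff_Int sets.Int_space_eq1)
  also have "\<dots> \<le> emeasure M (space M) - emeasure M (space N - A)"
    unfolding space by (intro ennreal_minus_mono le A') simp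
  also have "\<dots> = emeasure M A"
    using emeasure_compl[of "space N - A" M] A A' finite(2) space_eq
    by (simp add: Diff_Diff_Int sets.Int_space_eq1)
  finally show "emeasure M A = emeasure N A"
    using le[OF A] by simp
qed

locale open_partial_map =
  fixes D :: "'a::metric_space set" and f :: "'a \<Rightarrow> 'a"
  assumes open_D: "open D" and continuous_f: "continuous_on D f"
begin

abbreviation "\<Omega> \<equiv> Omega_inf D f"
abbreviation "\<Gamma> \<equiv> Gamma_inf D f"

definition orbit :: "'a \<Rightarrow> nat \<Rightarrow> 'a" where
  "orbit x = (\<lambda>n. (f ^^ n) x)"

lemma Omega_inf_iff: "x \<in> \<Omega> \<longleftrightarrow> x \<in> D \<and> f x \<in> \<Omega>"
proof -
  have shift_index: "(f ^^ Suc n) x = (f ^^ n) (f x)" for n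
    by (simp add: funpow_Suc_right del: funpow.simps)
  show ?thesis
  proof
    assume "x \<in> \<Omega>"
    then have "(f ^^ n) x \<in> D" for n
      by (simp add: Omega_inf_def)
    from this[of 0] this[of "Suc _"] show "x \<in> D \<and> f x \<in> \<Omega>"
      by (simp add: Omega_inf_def shift_index del: funpow.simps)
  next
    assume x: "x \<in> D \<and> f x \<in> \<Omega>"
    have "(f ^^ n) x \<in> D" for n
      using x by (cases n) (simp_all add: Omega_inf_def shift_index del: funpow.simps)
    then show "x \<in> \<Omega>"
      by (simp add: Omega_inf_def)
  qed
qed

lemma Omega_inf_subset: "\<Omega> \<subseteq> D"
  using Omega_inf_iff by blast

lemma f_Omega_inf: "x \<in> \<Omega> \<Longrightarrow> f x \<in> \<Omega>"
  using Omega_inf_iff by blast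

lemma funpow_Omega_inf: "x \<in> \<Omega> \<Longrightarrow> (f ^^ n) x \<in> \<Omega>"
  by (induction n) (simp_all add: f_Omega_inf)

definition defined_upto :: "nat \<Rightarrow> 'a set" where
  "defined_upto n = {x. \<forall>k<n. (f ^^ k) x \<in> D}"

lemma defined_upto_Suc: "defined_upto (Suc n) = D \<inter> f -` defined_upto n"
  unfolding defined_upto_def by (auto simp: All_less_Suc2 funpow_Suc_right simp del: funpow.simps)

lemma open_defined_upto: "open (defined_upto n)"
proof (induction n)
  case 0
  then show ?case by (simp add: defined_upto_def)
next
  case (Suc n)
  then have "open (f -` defined_upto n \<inter> D)"
    using continuous_on_open_vimage[OF open_D] continuous_f by blast
  then show ?case
    by (simp add: defined_upto_Suc Int_commute)
qed

lemma Omega_inf_borel: "\<Omega> \<in> sets borel"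
proof -
  have "\<Omega> = (\<Inter>n. defined_upto n)"
    unfolding Omega_inf_def defined_upto_def by blast
  then show ?thesis
    using open_defined_upto by auto
qed

lemma continuous_on_orbit: "continuous_on \<Omega> orbit"
proof -
  have "continuous_on \<Omega> (f ^^ n)" for n
  proof (induction n)
    case (Suc n)
    then show ?case
      using funpow_Omega_inf Omega_inf_subset
      by (auto intro: continuous_on_compose2[OF continuous_f])
  qed (simp add: continuous_on_id)
  then show ?thesis
    unfolding orbit_def by (intro continuous_on_coordinatewise_then_product)
qed

lemma Gamma_inf_eq: "\<Gamma> = closure (orbit ` \<Omega>)"
  unfolding Gamma_inf_def orbit_def[abs_def] ..

lemma orbit_in_Gamma_inf: "x \<in> \<Omega> \<Longrightarrow> orbit x \<in> \<Gamma>"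
  unfolding Gamma_inf_eq by (intro closure_subset[THEN subsetD] imageI)

lemma shift_orbit: "shift (orbit x) = orbit (f x)"
  unfolding shift_def orbit_def by (simp add: funpow_Suc_right del: funpow.simps)

lemma pi1_orbit: "pi1 (orbit x) = x"
  by (simp add: pi1_def orbit_def)

lemma shift_Gamma_inf: "shift ` \<Gamma> \<subseteq> \<Gamma>"
  unfolding Gamma_inf_eq
proof (rule image_closure_subset[OF continuous_on_shift])
  show "shift ` orbit ` \<Omega> \<subseteq> closure (orbit ` \<Omega>)"
    using shift_orbit f_Omega_inf closure_subset by fastforce
qed simp

lemma Gamma_inf_step:
  assumes s: "s \<in> \<Gamma>" and n: "s n \<in> D"
  shows "s (Suc n) = f (s n)"
proof -
  obtain y where y: "\<And>k. y k \<in> orbit ` \<Omega>" and lim: "y \<longlonglongrightarrow> s"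
    using s unfolding Gamma_inf_eq closure_sequential by blast
  have "(\<lambda>k. y k m) \<longlonglongrightarrow> s m" for m
    using continuous_on_tendsto_compose[OF continuous_on_product_coordinates lim] by simp
  moreover have "isCont f (s n)"
    using continuous_on_eq_continuous_at[OF open_D] continuous_f n by blast
  ultimately have "(\<lambda>k. f (y k n)) \<longlonglongrightarrow> f (s n)"
    using isCont_tendsto_compose by blast
  moreover have "y k (Suc n) = f (y k n)" for k
    using y[of k] by (auto simp: orbit_def)
  ultimately show ?thesis
    using LIMSEQ_unique \<open>(\<lambda>k. y k (Suc n)) \<longlonglongrightarrow> s (Suc n)\<close> by auto
qed

lemma Gamma_inf_eq_orbit:
  assumes s: "s \<in> \<Gamma>" and "s 0 \<in> \<Omega>"
  shows "s = orbit (s 0)"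
proof
  fix n
  show "s n = orbit (s 0) n"
  proof (induction n)
    case (Suc n)
    then have "s n \<in> D"
      using funpow_Omega_inf[OF \<open>s 0 \<in> \<Omega>\<close>] Omega_inf_subset by (auto simp: orbit_def)
    then show ?case
      using Suc Gamma_inf_step[OF s] by (simp add: orbit_def)
  qed (simp add: orbit_def)
qed

end

locale invariant_lift = open_partial_map +
  fixes \<mu> :: "'a measure"
  assumes sets_\<mu>: "sets \<mu> = sets borel"
    and prob_space_\<mu>: "prob_space \<mu>"
    and f_invariant: "push_dom D f \<mu> = \<mu>"
    and I_inf_null: "emeasure \<mu> (I_inf D f) = 0"
begin

abbreviation "\<mu>\<^sub>\<Omega> \<equiv> restrict_space \<mu> \<Omega>"
abbreviation "borel\<^sub>\<Gamma> \<equiv> restrict_space borel \<Gamma>"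

definition \<mu>_hat :: "(nat \<Rightarrow> 'a) measure" where
  "\<mu>_hat = distr \<mu>\<^sub>\<Omega> borel\<^sub>\<Gamma> orbit"

lemma space_\<mu>: "space \<mu> = UNIV"
  using sets_eq_imp_space_eq[OF sets_\<mu>] by simp

lemma Omega_inf_sets: "\<Omega> \<in> sets \<mu>"
  using Omega_inf_borel sets_\<mu> by simp

lemma space_\<mu>\<^sub>\<Omega>: "space \<mu>\<^sub>\<Omega> = \<Omega>"
  by (simp add: space_restrict_space space_\<mu>)

lemma sets_\<mu>\<^sub>\<Omega>_subset: "sets \<mu>\<^sub>\<Omega> \<subseteq> sets \<mu>"
  using sets_restrict_space_iff[of \<Omega> \<mu>] Omega_inf_sets space_\<mu> by auto

lemma Gamma_inf_borel: "\<Gamma> \<in> sets borel"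
  unfolding Gamma_inf_def by simp

lemma space_borel\<^sub>\<Gamma>: "space borel\<^sub>\<Gamma> = \<Gamma>"
  by (simp add: space_restrict_space)

lemma measurable_orbit: "orbit \<in> measurable \<mu>\<^sub>\<Omega> borel\<^sub>\<Gamma>"
proof (rule measurable_restrict_space2)
  show "orbit \<in> space \<mu>\<^sub>\<Omega> \<rightarrow> \<Gamma>"
    using orbit_in_Gamma_inf space_\<mu>\<^sub>\<Omega> by auto
  have "sets (restrict_space borel \<Omega>) = sets \<mu>\<^sub>\<Omega>"
    by (rule sets_restrict_space_cong) (simp add: sets_\<mu>)
  then show "orbit \<in> borel_measurable \<mu>\<^sub>\<Omega>"
    using borel_measurable_continuous_on_restrict[OF continuous_on_orbit] measurable_cong_sets by blast
qed

lemma measurable_shift_Gamma_inf: "shift \<in> measurable borel\<^sub>\<Gamma> borel\<^sub>\<Gamma>"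
  using shift_Gamma_inf borel_measurable_shift
  by (intro measurable_restrict_space2 measurable_restrict_space1) (auto simp: space_borel\<^sub>\<Gamma>)

lemma measurable_pi1_Gamma_inf: "pi1 \<in> measurable borel\<^sub>\<Gamma> borel"
  by (rule measurable_restrict_space1[OF borel_measurable_pi1])

lemma sets_\<mu>_hat [simp]: "sets \<mu>_hat = sets borel\<^sub>\<Gamma>"
  by (simp add: \<mu>_hat_def)

lemma measurable_\<mu>_hat_cong:
  "measurable \<mu>_hat M = measurable borel\<^sub>\<Gamma> M" "measurable M \<mu>_hat = measurable M borel\<^sub>\<Gamma>"
  by (rule measurable_cong_sets; simp)+

lemma space_\<mu>_hat: "space \<mu>_hat = \<Gamma>"
  by (simp add: \<mu>_hat_def space_borel\<^sub>\<Gamma>)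

lemma emeasure_\<mu>_hat: "A \<in> sets borel\<^sub>\<Gamma> \<Longrightarrow> emeasure \<mu>_hat A = emeasure \<mu> (orbit -` A \<inter> \<Omega>)"
  unfolding \<mu>_hat_def
  by (simp add: emeasure_distr[OF measurable_orbit] space_\<mu>\<^sub>\<Omega> emeasure_restrict_space Omega_inf_sets space_\<mu>)

lemma emeasure_Omega_inf: "emeasure \<mu> \<Omega> = 1"
proof -
  have "I_inf D f \<in> null_sets \<mu>"
    using I_inf_null sets.compl_sets[OF Omega_inf_sets] space_\<mu>
    by (auto simp: I_inf_def null_sets_def Compl_eq_Diff_UNIV)
  then have "emeasure \<mu> (space \<mu> - I_inf D f) = emeasure \<mu> (space \<mu>)"
    by (rule emeasure_Diff_null_set[OF _ sets.top])
  then show ?thesis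
    using prob_space.emeasure_space_1[OF prob_space_\<mu>] by (simp add: space_\<mu> I_inf_def)
qed

lemma emeasure_\<mu>_hat_Gamma_inf: "emeasure \<mu>_hat \<Gamma> = 1"
proof -
  have "orbit -` \<Gamma> \<inter> \<Omega> = \<Omega>"
    using orbit_in_Gamma_inf by auto
  then show ?thesis
    using emeasure_\<mu>_hat[of \<Gamma>] Gamma_inf_borel emeasure_Omega_inf
    by (simp add: sets_restrict_space_iff)
qed

lemma emeasure_distr_pi1_\<mu>_hat_le:
  assumes A: "A \<in> sets borel"
  shows "emeasure (distr \<mu>_hat borel pi1) A \<le> emeasure \<mu> A"
proof -
  have pi1: "pi1 \<in> measurable \<mu>_hat borel"
    using measurable_pi1_Gamma_inf by (simp add: measurable_\<mu>_hat_cong)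
  have "pi1 -` A \<inter> \<Gamma> \<in> sets borel\<^sub>\<Gamma>"
    using measurable_sets[OF measurable_pi1_Gamma_inf A] by (simp add: space_borel\<^sub>\<Gamma>)
  then have "emeasure (distr \<mu>_hat borel pi1) A = emeasure \<mu> (orbit -` (pi1 -` A \<inter> \<Gamma>) \<inter> \<Omega>)"
    using emeasure_distr[OF pi1 A] emeasure_\<mu>_hat by (simp add: space_\<mu>_hat)
  also have "\<dots> \<le> emeasure \<mu> A"
    using A sets_\<mu> by (intro emeasure_mono) (auto simp: pi1_orbit)
  finally show ?thesis .
qed

lemma emeasure_vimage_f: "B \<in> sets borel \<Longrightarrow> emeasure \<mu> (f -` B \<inter> D) = emeasure \<mu> B"
proof -
  assume B: "B \<in> sets borel"
  have "sets (restrict_space borel D) = sets (restrict_space \<mu> D)"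
    by (rule sets_restrict_space_cong) (simp add: sets_\<mu>)
  then have "f \<in> measurable (restrict_space \<mu> D) borel"
    using borel_measurable_continuous_on_restrict[OF continuous_f] measurable_cong_sets by blast
  then have "emeasure (push_dom D f \<mu>) B = emeasure \<mu> (f -` B \<inter> D)"
    using B open_D sets_\<mu> unfolding push_dom_def
    by (simp add: emeasure_distr space_restrict_space space_\<mu> emeasure_restrict_space)
  then show ?thesis
    using f_invariant by simp
qed

lemma distr_shift_\<mu>_hat: "distr \<mu>_hat borel\<^sub>\<Gamma> shift = \<mu>_hat"
proof (rule measure_eqI)
  fix A assume "A \<in> sets (distr \<mu>_hat borel\<^sub>\<Gamma> shift)"
  then have A: "A \<in> sets borel\<^sub>\<Gamma>" by simp
  have shift_A: "shift -` A \<inter> \<Gamma> \<in> sets borel\<^sub>\<Gamma>"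
    using measurable_sets[OF measurable_shift_Gamma_inf A] by (simp add: space_borel\<^sub>\<Gamma>)
  have orbit_A: "orbit -` A \<inter> \<Omega> \<in> sets borel"
    using measurable_sets[OF measurable_orbit A] sets_\<mu>\<^sub>\<Omega>_subset sets_\<mu> space_\<mu>\<^sub>\<Omega> by auto
  have "orbit -` (shift -` A \<inter> \<Gamma>) \<inter> \<Omega> = f -` (orbit -` A \<inter> \<Omega>) \<inter> D"
  proof (intro set_eqI)
    fix x
    show "x \<in> orbit -` (shift -` A \<inter> \<Gamma>) \<inter> \<Omega> \<longleftrightarrow> x \<in> f -` (orbit -` A \<inter> \<Omega>) \<inter> D"
      using Omega_inf_iff[of x] orbit_in_Gamma_inf[of x] shift_orbit[of x] by auto
  qed
  then have "emeasure \<mu>_hat (shift -` A \<inter> \<Gamma>) = emeasure \<mu>_hat A"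
    using emeasure_\<mu>_hat[OF shift_A] emeasure_\<mu>_hat[OF A] emeasure_vimage_f[OF orbit_A] by simp
  moreover have "shift \<in> measurable \<mu>_hat borel\<^sub>\<Gamma>"
    using measurable_shift_Gamma_inf by (simp add: measurable_\<mu>_hat_cong)
  ultimately show "emeasure (distr \<mu>_hat borel\<^sub>\<Gamma> shift) A = emeasure \<mu>_hat A"
    using A by (simp add: emeasure_distr space_\<mu>_hat)
qed (simp add: sets_\<mu>_hat)

lemma emeasure_le_\<mu>_hat:
  assumes sets: "sets \<nu> = sets borel\<^sub>\<Gamma>"
    and le: "\<forall>B\<in>sets borel. emeasure (distr \<nu> borel pi1) B \<le> emeasure \<mu> B"
    and A: "A \<in> sets borel\<^sub>\<Gamma>"
  shows "emeasure \<nu> A \<le> emeasure \<mu>_hat A"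
proof -
  have space: "space \<nu> = \<Gamma>"
    using sets_eq_imp_space_eq[OF sets] space_borel\<^sub>\<Gamma> by simp
  have pi1: "pi1 \<in> measurable \<nu> borel"
    using measurable_pi1_Gamma_inf measurable_cong_sets[OF sets refl] by blast
  have emeasure_pi1: "emeasure \<nu> (pi1 -` B \<inter> \<Gamma>) \<le> emeasure \<mu> B" if "B \<in> sets borel" for B
    using le[rule_format, OF that] emeasure_distr[OF pi1 that] space by simp
  define B where "B = orbit -` A \<inter> \<Omega>"
  define N where "N = pi1 -` (- \<Omega>) \<inter> \<Gamma>"
  have B_borel: "B \<in> sets borel" and N_borel: "- \<Omega> \<in> sets borel"
    using measurable_sets[OF measurable_orbit A] sets_\<mu>\<^sub>\<Omega>_subset sets_\<mu> space_\<mu>\<^sub>\<Omega> Omega_inf_borel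
    by (auto simp: B_def)
  have B_sets: "pi1 -` B \<inter> \<Gamma> \<in> sets \<nu>" and N_sets: "N \<in> sets \<nu>"
    using measurable_sets[OF pi1 B_borel] measurable_sets[OF pi1 N_borel] by (simp_all add: space N_def)
  have "emeasure \<nu> N = 0"
    using emeasure_pi1[OF N_borel] I_inf_null by (simp add: N_def I_inf_def)
  have "A \<subseteq> (pi1 -` B \<inter> \<Gamma>) \<union> N"
  proof
    fix s assume "s \<in> A"
    moreover have "s \<in> \<Gamma>"
      using \<open>s \<in> A\<close> A sets_restrict_space_iff[of \<Gamma> borel] Gamma_inf_borel by auto
    ultimately show "s \<in> (pi1 -` B \<inter> \<Gamma>) \<union> N"
      using Gamma_inf_eq_orbit[of s] by (cases "s 0 \<in> \<Omega>") (auto simp: B_def N_def pi1_def)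
  qed
  then have "emeasure \<nu> A \<le> emeasure \<nu> (pi1 -` B \<inter> \<Gamma>) + emeasure \<nu> N"
    using B_sets N_sets emeasure_subadditive[OF B_sets N_sets] emeasure_mono[of A _ \<nu>]
    by (meson order_trans sets.Un)
  also have "\<dots> \<le> emeasure \<mu> B"
    using emeasure_pi1[OF B_borel] \<open>emeasure \<nu> N = 0\<close> by simp
  also have "\<dots> = emeasure \<mu>_hat A"
    using emeasure_\<mu>_hat[OF A] by (simp add: B_def)
  finally show ?thesis .
qed

lemma \<mu>_hat_unique:
  assumes "sets \<nu> = sets borel\<^sub>\<Gamma>"
    and "\<forall>B\<in>sets borel. emeasure (distr \<nu> borel pi1) B \<le> emeasure \<mu> B"
    and "emeasure \<nu> \<Gamma> = 1"
  shows "\<nu> = \<mu>_hat"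
proof (rule measure_eqI_emeasure_le)
  show "finite_measure \<mu>_hat"
    using emeasure_\<mu>_hat_Gamma_inf by (intro finite_measureI) (simp add: space_\<mu>_hat)
  show "emeasure \<nu> (space \<nu>) = emeasure \<mu>_hat (space \<mu>_hat)"
    using assms(3) emeasure_\<mu>_hat_Gamma_inf sets_eq_imp_space_eq[OF assms(1)]
    by (simp add: space_\<mu>_hat space_borel\<^sub>\<Gamma>)
qed (use assms emeasure_le_\<mu>_hat in auto)

lemma ks_entropy_\<mu>_hat: "ks_entropy \<mu>\<^sub>\<Omega> f = ks_entropy \<mu>_hat shift"
proof -
  interpret semiconjugacy \<mu>\<^sub>\<Omega> \<mu>_hat f shift orbit
  proof
    show "orbit \<in> measurable \<mu>\<^sub>\<Omega> \<mu>_hat"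
      using measurable_orbit by (simp add: measurable_\<mu>_hat_cong)
    show "distr \<mu>\<^sub>\<Omega> \<mu>_hat orbit = \<mu>_hat"
      unfolding \<mu>_hat_def by (rule distr_cong) simp_all
    show "shift \<in> measurable \<mu>_hat \<mu>_hat"
      using measurable_shift_Gamma_inf by (simp add: measurable_\<mu>_hat_cong)
  qed (auto simp: space_\<mu>\<^sub>\<Omega> f_Omega_inf shift_orbit)
  show ?thesis
    using measurable_pi1_Gamma_inf sets_\<mu>\<^sub>\<Omega>_subset sets_\<mu>
    by (intro ks_entropy_eq[where \<psi> = pi1 and L = \<mu>])
      (auto simp: pi1_orbit measurable_cong_sets[OF sets_\<mu>_hat sets_\<mu>])
qed

end

theorem proposition1p6:
  fixes D :: "'a::metric_space set" and f :: "'a \<Rightarrow> 'a" and \<mu> :: "'a measure"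
  assumes "compact (UNIV :: 'a set)"
    and "open_dense_map D f"
    and "good_wrt_iterates D f"
    and "sets \<mu> = sets borel" and "prob_space \<mu>"
    and "push_dom D f \<mu> = \<mu>"
    and "emeasure \<mu> (I_inf D f) = 0"
  shows "\<exists>\<nu> :: (nat \<Rightarrow> 'a) measure.
           (sets \<nu> = sets (restrict_space borel (Gamma_inf D f))
            \<and> (\<forall>A\<in>sets borel. emeasure (distr \<nu> borel pi1) A \<le> emeasure \<mu> A)
            \<and> emeasure \<nu> (Gamma_inf D f) = 1
            \<and> distr \<nu> (restrict_space borel (Gamma_inf D f)) shift = \<nu>)
         \<and> (\<forall>\<nu>' :: (nat \<Rightarrow> 'a) measure.
              sets \<nu>' = sets (restrict_space borel (Gamma_inf D f))
              \<and> (\<forall>A\<in>sets borel. emeasure (distr \<nu>' borel pi1) A \<le> emeasure \<mu> A)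
              \<and> emeasure \<nu>' (Gamma_inf D f) = 1
              \<and> distr \<nu>' (restrict_space borel (Gamma_inf D f)) shift = \<nu>'
              \<longrightarrow> \<nu>' = \<nu>)
         \<and> ks_entropy (restrict_space \<mu> (Omega_inf D f)) f = ks_entropy \<nu> shift"
proof -
  interpret invariant_lift D f \<mu>
    using assms unfolding invariant_lift_def invariant_lift_axioms_def open_partial_map_def open_dense_map_def
    by simp
  show ?thesis
    using sets_\<mu>_hat emeasure_distr_pi1_\<mu>_hat_le emeasure_\<mu>_hat_Gamma_inf distr_shift_\<mu>_hat
      \<mu>_hat_unique ks_entropy_\<mu>_hat
    by (intro exI[of _ \<mu>_hat]) blast
qed

end
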